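(* Let $d\ge 3$, $\lambda>0$ with $\log d\lesssim\lambda\lesssim d$, $\rho_0=\log^{-c_0}d$ for a constant $c_0>0$, $\mu=\rho_0/(d+\lambda)$, and let $(a,b,c)$ solve \[ \dot a=a(24-16a-8r),\quad \dot b=8(1+\lambda)(1-r)b-16(1+\lambda)^2b^2,\quad \dot c=8(1-r)c-16c^2, \] with $r=a+(1+\lambda)b+(d-2)c$ and $a(0)=b(0)=c(0)=\mu$. Let $B=(1+\lambda)b$, $C=(d-2)c$, fix $\rho\in(0,1/12)$ and let $T_{1a}=\inf\{t\ge0: r(t)\ge\rho\}$. Then, for $d$ large enough: (1) For all $t\in[0,T_{1a}]$, $r(t)\le\rho$ and \[ a(0)e^{24(1-\rho)t}\le a(t)\le a(0)e^{24t},\quad b(0)e^{8(1+\lambda)(1-3\rho)t}\le b(t)\le b(0)e^{8(1+\lambda)t}, \] \[ c(0)e^{(8(1-\rho)-16\rho/(d-2))t}\le c(t)\le c(0)e^{8t}. \] (2) $T_{1a}=O(\lambda^{-1}\log d)$. (3) $a(T_{1a})=O(\rho_0/d)$, $C(T_{1a})=O(\rho_0)$, and $B(T_{1a})=\rho-a(T_{1a})-C(T_{1a})=\rho(1+o(1))$.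
   Context: This ODE is the population gradient flow of the phase-retrieval model $y=(x^\top w_\star)^2+\nu$, $x\sim\mathcal N(0,I_d+\lambda vv^\top)$ ($v\perp w_\star$ unit vectors), with network $f_W(x)=\sum_{j=1}^d(w_j^\top x)^2$, in the coordinates $WW^\top=a\,w_\star w_\star^\top+b\,vv^\top+c(I-w_\star w_\star^\top-vv^\top)$, started from $WW^\top=\mu I_d$. Asymptotic notation refers to $d\to\infty$. *)

theory Defs
  imports "HOL-Analysis.Analysis"
begin

definition rfun :: "nat \<Rightarrow> real \<Rightarrow> (real \<Rightarrow> real) \<Rightarrow> (real \<Rightarrow> real) \<Rightarrow> (real \<Rightarrow> real) \<Rightarrow> real \<Rightarrow> real" where
  "rfun d lam a b c t = a t + (1 + lam) * b t + (real d - 2) * c t"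

definition is_flow :: "nat \<Rightarrow> real \<Rightarrow> real \<Rightarrow> (real \<Rightarrow> real) \<Rightarrow> (real \<Rightarrow> real) \<Rightarrow> (real \<Rightarrow> real) \<Rightarrow> bool" where
  "is_flow d lam mu a b c \<longleftrightarrow>
     a 0 = mu \<and> b 0 = mu \<and> c 0 = mu \<and>
     (\<forall>t\<ge>0.
        (a has_real_derivative a t * (24 - 16 * a t - 8 * rfun d lam a b c t)) (at t within {0..}) \<and>
        (b has_real_derivative 8 * (1 + lam) * (1 - rfun d lam a b c t) * b t - 16 * (1 + lam)^2 * (b t)^2) (at t within {0..}) \<and>
        (c has_real_derivative 8 * (1 - rfun d lam a b c t) * c t - 16 * (c t)^2) (at t within {0..}))"

end

(*
  Each of a, b, c solves a linear equation f' = f g whose rate g is a function of a, B, C and r,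
  so f t = f 0 exp (integral of g), and as long as r <= rho the rates are pinned between constants,
  which gives the exponential sandwich bounds. B grows at rate at least 8 (1 + lam) (1 - 3 rho)
  >= 6 (1 + lam), hence r reaches rho, and it does so before time ln (1 / mu) / (6 (1 + lam)),
  which is O(ln d / lam) = O(1 / K1). Over such a time a and c grow by at most a constant factor,
  so a T = O(rho0 / d) and C T = O(rho0), and B T = rho - a T - C T makes up the rest.
*)

theory Submission
  imports Defs "HOL-Real_Asymp.Real_Asymp"
begin

lemma linear_ode_exp_integral:
  fixes f g :: "real \<Rightarrow> real"
  assumes deriv: "\<And>s. 0 \<le> s \<Longrightarrow> (f has_real_derivative f s * g s) (at s within {0..})"
    and cont: "continuous_on {0..} g" and t: "0 \<le> t"
  shows "f t = f 0 * exp (integral {0..t} g)"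
proof -
  have cont_t: "continuous_on {0..t} g"
    using cont by (rule continuous_on_subset) auto
  have "((\<lambda>s. f s * exp (- integral {0..s} g)) has_real_derivative 0) (at s within {0..t})"
    if s: "s \<in> {0..t}" for s
  proof -
    have "(f has_real_derivative f s * g s) (at s within {0..t})"
      using deriv[of s] s by (auto intro: DERIV_subset)
    moreover have "((\<lambda>s. exp (- integral {0..s} g)) has_real_derivative
        exp (- integral {0..s} g) * - g s) (at s within {0..t})"
      by (rule DERIV_chain2[OF DERIV_exp DERIV_minus[OF integral_has_real_derivative[OF cont_t s]]])
    ultimately show ?thesis
      using DERIV_mult by (fastforce simp: algebra_simps)
  qed
  then obtain k where "\<forall>s\<in>{0..t}. f s * exp (- integral {0..s} g) = k"
    using has_field_derivative_zero_constant[OF convex_real_interval(5)] by blast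
  then have "f t * exp (- integral {0..t} g) = f 0"
    using t by force
  then show ?thesis
    by (simp add: exp_minus field_simps)
qed

lemma linear_ode_exp_bounds:
  fixes f g :: "real \<Rightarrow> real"
  assumes deriv: "\<And>s. 0 \<le> s \<Longrightarrow> (f has_real_derivative f s * g s) (at s within {0..})"
    and cont: "continuous_on {0..} g" and t: "0 \<le> t" and f0: "0 \<le> f 0"
    and rate: "\<And>s. s \<in> {0..t} \<Longrightarrow> k \<le> g s \<and> g s \<le> K"
  shows "f 0 * exp (k * t) \<le> f t \<and> f t \<le> f 0 * exp (K * t)"
proof -
  have int: "g integrable_on {0..t}"
    using cont by (intro integrable_continuous_real) (rule continuous_on_subset, auto)
  have "k * t \<le> integral {0..t} g"
    using integral_le[of "\<lambda>_. k" "{0..t}" g] int rate t by (simp add: integrable_const_ivl mult.commute)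
  moreover have "integral {0..t} g \<le> K * t"
    using integral_le[of g "{0..t}" "\<lambda>_. K"] int rate t by (simp add: integrable_const_ivl mult.commute)
  ultimately show ?thesis
    using f0 by (auto simp: linear_ode_exp_integral[OF deriv cont t] intro!: mult_left_mono)
qed

lemma first_passage_time:
  fixes r :: "real \<Rightarrow> real"
  assumes cont: "continuous_on {0..} r" and start: "r 0 < \<rho>" and reached: "\<exists>t\<ge>0. \<rho> \<le> r t"
  defines "T \<equiv> Inf {t. 0 \<le> t \<and> \<rho> \<le> r t}"
  shows "0 \<le> T" and "r T = \<rho>" and "\<And>t. t \<in> {0..T} \<Longrightarrow> r t \<le> \<rho>"
proof -
  define S where "S = {t. 0 \<le> t \<and> \<rho> \<le> r t}"
  have "S = {0..} \<inter> r -` {\<rho>..}"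
    by (auto simp: S_def)
  then have "closed S"
    using continuous_closed_preimage[OF cont closed_atLeast closed_atLeast] by simp
  moreover have "S \<noteq> {}"
    using reached by (auto simp: S_def)
  moreover have bdd: "bdd_below S"
    by (rule bdd_belowI[of _ 0]) (simp add: S_def)
  ultimately have "T \<in> S"
    unfolding T_def S_def[symmetric] by (rule closed_contains_Inf[rotated 2])
  then have reached_T: "\<rho> \<le> r T"
    by (simp add: S_def)
  show T_nonneg: "0 \<le> T"
    using \<open>T \<in> S\<close> by (simp add: S_def)
  have before: "r t < \<rho>" if "0 \<le> t" "t < T" for t
    using cInf_lower[OF _ bdd, of t] that by (force simp: S_def T_def)
  show "r T = \<rho>"
  proof (rule ccontr)
    assume "r T \<noteq> \<rho>"
    then have "\<rho> < r T"
      using reached_T by simp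
    moreover have "continuous_on {0..T} r"
      using cont by (rule continuous_on_subset) auto
    ultimately obtain x where "0 \<le> x" "x \<le> T" "r x = \<rho>"
      using IVT'[of r 0 \<rho> T] start T_nonneg by auto
    then show False
      using before[of x] \<open>\<rho> < r T\<close> by (cases "x = T") auto
  qed
  then show "r t \<le> \<rho>" if "t \<in> {0..T}" for t
    using before[of t] that by (cases "t = T") auto
qed

lemma one_le_ln:
  fixes x :: real
  assumes "3 \<le> x"
  shows "1 \<le> ln x"
  using ln_le_cancel_iff[of "exp 1" x] exp_le assms by simp

lemma ln_initial_scale_le:
  fixes x lam K c0 :: real
  assumes x: "3 \<le> x" and lam: "0 < lam" "lam \<le> K * x" and c0: "0 \<le> c0"
  shows "ln ((x + lam) / ln x powr (- c0)) \<le> (ln (1 + K) + 1 + c0) * ln x"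
proof -
  have "0 < x"
    using x by linarith
  have L: "1 \<le> ln x"
    using one_le_ln[OF x] .
  have "x \<noteq> 1"
    using L by auto
  have "0 < K * x"
    using lam by linarith
  then have "0 < K"
    using \<open>0 < x\<close> by (simp add: zero_less_mult_iff)
  have "ln ((x + lam) / ln x powr (- c0)) = ln (x + lam) + c0 * ln (ln x)"
    using L \<open>0 < x\<close> \<open>x \<noteq> 1\<close> lam by (simp add: ln_div ln_powr)
  also have "ln (x + lam) \<le> ln ((1 + K) * x)"
    using lam \<open>0 < x\<close> by (simp add: algebra_simps)
  also have "\<dots> = ln (1 + K) + ln x"
    using \<open>0 < K\<close> \<open>0 < x\<close> by (simp add: ln_mult)
  also have "c0 * ln (ln x) \<le> c0 * ln x"
    using ln_le_minus_one[of "ln x"] L c0 by (intro mult_left_mono) auto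
  also have "ln (1 + K) \<le> ln (1 + K) * ln x"
    using L \<open>0 < K\<close> by simp
  finally show ?thesis
    by (simp add: algebra_simps)
qed

lemma eventually_ln_powr_less:
  fixes c0 \<delta> :: real
  assumes "0 < c0" and "0 < \<delta>"
  shows "\<exists>D. \<forall>d\<ge>D. ln (real d) powr (- c0) < \<delta>"
proof -
  have "\<forall>\<^sub>F d in sequentially. ln (real d) powr (- c0) < \<delta>"
    using assms by real_asymp
  then show ?thesis
    by (simp add: eventually_sequentially)
qed

locale reduced_flow =
  fixes d :: nat and lam mu :: real and a b c :: "real \<Rightarrow> real"
  assumes flow: "is_flow d lam mu a b c"
    and d_ge_3: "3 \<le> d" and lam_pos: "0 < lam" and mu_pos: "0 < mu"
begin

abbreviation r :: "real \<Rightarrow> real" where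
  "r \<equiv> rfun d lam a b c"

abbreviation hitting_time :: "real \<Rightarrow> real" where
  "hitting_time \<rho> \<equiv> Inf {t. 0 \<le> t \<and> \<rho> \<le> r t}"

lemma initial_values: "a 0 = mu" "b 0 = mu" "c 0 = mu"
  using flow by (simp_all add: is_flow_def)

lemma r_initial: "r 0 = mu * (real d + lam)"
  by (simp add: rfun_def initial_values algebra_simps)

lemma a_deriv: "0 \<le> t \<Longrightarrow> (a has_real_derivative a t * (24 - 16 * a t - 8 * r t)) (at t within {0..})"
  using flow by (simp add: is_flow_def)

lemma b_deriv: "0 \<le> t \<Longrightarrow>
  (b has_real_derivative b t * (8 * (1 + lam) * (1 - r t - 2 * ((1 + lam) * b t)))) (at t within {0..})"
  using flow by (simp add: is_flow_def algebra_simps power2_eq_square)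

lemma c_deriv: "0 \<le> t \<Longrightarrow> (c has_real_derivative c t * (8 * (1 - r t) - 16 * c t)) (at t within {0..})"
  using flow by (simp add: is_flow_def algebra_simps power2_eq_square)

lemma continuous_on_components: "continuous_on {0..} a" "continuous_on {0..} b" "continuous_on {0..} c"
  by (rule DERIV_continuous_on[OF a_deriv] DERIV_continuous_on[OF b_deriv]
      DERIV_continuous_on[OF c_deriv]; simp)+

lemma continuous_on_r: "continuous_on {0..} r"
  unfolding rfun_def by (intro continuous_intros continuous_on_components)

lemma continuous_on_rates:
  "continuous_on {0..} (\<lambda>s. 24 - 16 * a s - 8 * r s)"
  "continuous_on {0..} (\<lambda>s. 8 * (1 + lam) * (1 - r s - 2 * ((1 + lam) * b s)))"
  "continuous_on {0..} (\<lambda>s. 8 * (1 - r s) - 16 * c s)"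
  by (intro continuous_intros continuous_on_components continuous_on_r)+

lemma components_pos:
  assumes "0 \<le> t"
  shows "0 < a t" and "0 < (1 + lam) * b t" and "0 < (real d - 2) * c t"
proof -
  have "a t = a 0 * exp (integral {0..t} (\<lambda>s. 24 - 16 * a s - 8 * r s))"
    by (rule linear_ode_exp_integral[OF a_deriv continuous_on_rates(1) assms])
  moreover have "b t = b 0 * exp (integral {0..t} (\<lambda>s. 8 * (1 + lam) * (1 - r s - 2 * ((1 + lam) * b s))))"
    by (rule linear_ode_exp_integral[OF b_deriv continuous_on_rates(2) assms])
  moreover have "c t = c 0 * exp (integral {0..t} (\<lambda>s. 8 * (1 - r s) - 16 * c s))"
    by (rule linear_ode_exp_integral[OF c_deriv continuous_on_rates(3) assms])
  ultimately show "0 < a t" and "0 < (1 + lam) * b t" and "0 < (real d - 2) * c t"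
    using mu_pos lam_pos d_ge_3 by (simp_all add: initial_values)
qed

lemma first_phase_bounds:
  assumes t: "0 \<le> t" and below: "\<And>s. s \<in> {0..t} \<Longrightarrow> r s \<le> \<rho>"
  shows "a 0 * exp (24 * (1 - \<rho>) * t) \<le> a t \<and> a t \<le> a 0 * exp (24 * t)"
    and "b 0 * exp (8 * (1 + lam) * (1 - 3 * \<rho>) * t) \<le> b t \<and> b t \<le> b 0 * exp (8 * (1 + lam) * t)"
    and "c 0 * exp ((8 * (1 - \<rho>) - 16 * \<rho> / (real d - 2)) * t) \<le> c t \<and> c t \<le> c 0 * exp (8 * t)"
proof -
  have parts: "0 < a s" "0 < (1 + lam) * b s" "0 < (real d - 2) * c s"
    "a s + (1 + lam) * b s + (real d - 2) * c s \<le> \<rho>" if "s \<in> {0..t}" for s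
    using components_pos[of s] below[OF that] that rfun_def[of d lam a b c s] by auto
  have "24 * (1 - \<rho>) \<le> 24 - 16 * a s - 8 * r s \<and> 24 - 16 * a s - 8 * r s \<le> 24"
    if "s \<in> {0..t}" for s
    using parts[OF that] rfun_def[of d lam a b c s] by auto
  then show "a 0 * exp (24 * (1 - \<rho>) * t) \<le> a t \<and> a t \<le> a 0 * exp (24 * t)"
    using mu_pos
    by (intro linear_ode_exp_bounds[OF a_deriv continuous_on_rates(1) t]) (auto simp: initial_values)
  have "1 - 3 * \<rho> \<le> 1 - r s - 2 * ((1 + lam) * b s) \<and> 1 - r s - 2 * ((1 + lam) * b s) \<le> 1"
    if "s \<in> {0..t}" for s
    using parts[OF that] rfun_def[of d lam a b c s] by (intro conjI) linarith+
  then have "8 * (1 + lam) * (1 - 3 * \<rho>) \<le> 8 * (1 + lam) * (1 - r s - 2 * ((1 + lam) * b s))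
    \<and> 8 * (1 + lam) * (1 - r s - 2 * ((1 + lam) * b s)) \<le> 8 * (1 + lam)"
    if "s \<in> {0..t}" for s
    using that lam_pos by (auto intro: mult_left_mono simp del: mult_le_cancel_left)
  then show "b 0 * exp (8 * (1 + lam) * (1 - 3 * \<rho>) * t) \<le> b t \<and> b t \<le> b 0 * exp (8 * (1 + lam) * t)"
    using mu_pos
    by (intro linear_ode_exp_bounds[OF b_deriv continuous_on_rates(2) t]) (auto simp: initial_values)
  have c_le: "0 < c s" "c s \<le> \<rho> / (real d - 2)" if "s \<in> {0..t}" for s
  proof -
    have "0 < real d - 2" "0 < (real d - 2) * c s" "(real d - 2) * c s \<le> \<rho>"
      using d_ge_3 parts[OF that] by linarith+
    then show "0 < c s" "c s \<le> \<rho> / (real d - 2)"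
      by (simp_all add: zero_less_mult_iff pos_le_divide_eq mult.commute)
  qed
  have "8 * (1 - \<rho>) - 16 * \<rho> / (real d - 2) \<le> 8 * (1 - r s) - 16 * c s
    \<and> 8 * (1 - r s) - 16 * c s \<le> 8" if "s \<in> {0..t}" for s
    using c_le[OF that] parts[OF that] rfun_def[of d lam a b c s] by auto
  then show "c 0 * exp ((8 * (1 - \<rho>) - 16 * \<rho> / (real d - 2)) * t) \<le> c t \<and> c t \<le> c 0 * exp (8 * t)"
    using mu_pos
    by (intro linear_ode_exp_bounds[OF c_deriv continuous_on_rates(3) t]) (auto simp: initial_values)
qed

lemma r_reaches:
  assumes "\<rho> < 1/3"
  shows "\<exists>t\<ge>0. \<rho> \<le> r t"
proof (rule ccontr)
  assume "\<not> ?thesis"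
  then have below: "r t < \<rho>" if "0 \<le> t" for t
    using that by auto
  define \<beta> where "\<beta> = 8 * (1 + lam) * (1 - 3 * \<rho>)"
  have "0 < r 0"
    using r_initial mu_pos lam_pos by simp
  then have "0 < \<beta>"
    using below[of 0] assms lam_pos by (simp add: \<beta>_def)
  \<comment> \<open>By time \<open>t\<close> the lower bound \<open>(1 + lam) * mu * exp (\<beta> * t) \<ge> (1 + lam) * mu * (1 + \<beta> * t)\<close>
    for \<open>B\<close> exceeds \<open>\<rho>\<close>.\<close>
  define t where "t = \<rho> / ((1 + lam) * mu * \<beta>)"
  have "0 \<le> t"
    using \<open>0 < r 0\<close> below[of 0] \<open>0 < \<beta>\<close> lam_pos mu_pos by (simp add: t_def)
  have "(1 + lam) * mu * (1 + \<beta> * t) \<le> (1 + lam) * (b 0 * exp (\<beta> * t))"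
    using exp_ge_add_one_self[of "\<beta> * t"] lam_pos mu_pos by (simp add: initial_values)
  also have "\<dots> \<le> (1 + lam) * b t"
    using first_phase_bounds(2)[OF \<open>0 \<le> t\<close>, of \<rho>] below lam_pos by (simp add: \<beta>_def less_imp_le)
  also have "\<dots> < r t"
    using components_pos[OF \<open>0 \<le> t\<close>] rfun_def[of d lam a b c t] by simp
  also have "\<dots> < \<rho>"
    using below[OF \<open>0 \<le> t\<close>] .
  finally have "(1 + lam) * mu * (1 + \<beta> * t) < \<rho>" .
  moreover have "(1 + lam) * mu * \<beta> \<noteq> 0"
    using lam_pos mu_pos \<open>0 < \<beta>\<close> by simp
  then have "(1 + lam) * mu * \<beta> * t = \<rho>"
    by (simp add: t_def)
  then have "(1 + lam) * mu * (1 + \<beta> * t) = (1 + lam) * mu + \<rho>"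
    by (simp add: algebra_simps)
  moreover have "0 < (1 + lam) * mu"
    using lam_pos mu_pos by simp
  ultimately show False
    by linarith
qed

lemma
  assumes "r 0 < \<rho>" and "\<rho> < 1/3"
  shows hitting_time_nonneg: "0 \<le> hitting_time \<rho>"
    and r_hitting_time: "r (hitting_time \<rho>) = \<rho>"
    and r_le_until_hitting_time: "\<And>t. t \<in> {0..hitting_time \<rho>} \<Longrightarrow> r t \<le> \<rho>"
  using first_passage_time[OF continuous_on_r assms(1) r_reaches[OF assms(2)]] by simp_all

lemma hitting_time_lt_ln:
  assumes "r 0 < \<rho>" and "\<rho> < 1/12"
  shows "6 * (1 + lam) * hitting_time \<rho> < ln (1 / mu)"
proof -
  let ?T = "hitting_time \<rho>"
  have T: "0 \<le> ?T" "r ?T = \<rho>" "\<And>t. t \<in> {0..?T} \<Longrightarrow> r t \<le> \<rho>"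
    using hitting_time_nonneg r_hitting_time r_le_until_hitting_time assms by simp_all
  have "6 * (1 + lam) \<le> 8 * (1 + lam) * (1 - 3 * \<rho>)"
    using mult_left_mono[of "3/4" "1 - 3 * \<rho>" "8 * (1 + lam)"] assms(2) lam_pos by simp
  then have "6 * (1 + lam) * ?T \<le> 8 * (1 + lam) * (1 - 3 * \<rho>) * ?T"
    using T(1) by (rule mult_right_mono)
  then have "mu * exp (6 * (1 + lam) * ?T) \<le> mu * exp (8 * (1 + lam) * (1 - 3 * \<rho>) * ?T)"
    using mu_pos by simp
  also have "\<dots> \<le> b ?T"
    using first_phase_bounds(2)[OF T(1,3)] by (simp add: initial_values)
  also have "\<dots> \<le> (1 + lam) * b ?T"
    using components_pos[OF T(1)] lam_pos by (simp add: zero_less_mult_iff)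
  also have "\<dots> < \<rho>"
    using components_pos[OF T(1)] rfun_def[of d lam a b c ?T] T(2) by simp
  finally have "mu * exp (6 * (1 + lam) * ?T) < 1"
    using assms(2) by simp
  then have "exp (6 * (1 + lam) * ?T) < 1 / mu"
    using mu_pos by (simp add: field_simps)
  then show ?thesis
    using ln_strict_mono by fastforce
qed

lemma hitting_time_le_ln_d:
  assumes start: "r 0 < \<rho>" and "\<rho> < 1/12" and "0 \<le> c0"
    and mu: "mu = ln (real d) powr (- c0) / (real d + lam)"
    and lam: "K1 * ln (real d) \<le> lam" "lam \<le> K2 * real d" and "0 < K1"
  shows "hitting_time \<rho> \<le> (ln (1 + K2) + 1 + c0) / 6 * ln (real d) / lam"
    and "exp (24 * hitting_time \<rho>) \<le> exp (4 * (ln (1 + K2) + 1 + c0) / K1)"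
proof -
  define N where "N = ln (1 + K2) + 1 + c0"
  have "3 \<le> real d"
    using d_ge_3 by simp
  have "6 * lam * hitting_time \<rho> \<le> 6 * (1 + lam) * hitting_time \<rho>"
    using hitting_time_nonneg[OF start] \<open>\<rho> < 1/12\<close> by (simp add: algebra_simps)
  also have "\<dots> < ln (1 / mu)"
    by (rule hitting_time_lt_ln[OF start \<open>\<rho> < 1/12\<close>])
  also have "\<dots> \<le> N * ln (real d)"
    using ln_initial_scale_le[OF \<open>3 \<le> real d\<close> lam_pos lam(2) \<open>0 \<le> c0\<close>]
    by (simp add: mu N_def)
  finally show T_le: "hitting_time \<rho> \<le> N / 6 * ln (real d) / lam"
    using lam_pos by (simp add: field_simps)
  have "0 < K2 * real d"
    using lam_pos lam(2) by linarith
  then have "0 \<le> N"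
    by (simp add: zero_less_mult_iff N_def \<open>0 \<le> c0\<close>)
  then have "N / 6 * (K1 * ln (real d)) \<le> N / 6 * lam"
    using lam(1) by (intro mult_left_mono) simp_all
  then have "N / 6 * ln (real d) / lam \<le> N / 6 / K1"
    using lam_pos \<open>0 < K1\<close> by (simp add: field_simps)
  with T_le have "hitting_time \<rho> \<le> N / 6 / K1"
    by linarith
  then have "24 * hitting_time \<rho> \<le> 4 * N / K1"
    using \<open>0 < K1\<close> by (simp add: field_simps)
  then show "exp (24 * hitting_time \<rho>) \<le> exp (4 * N / K1)"
    by simp
qed

lemma hitting_time_endpoint:
  assumes "r 0 < \<rho>" and "\<rho> < 1/3"
  defines "T \<equiv> hitting_time \<rho>"
  shows "0 < a T" and "a T \<le> mu * exp (24 * T)"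
    and "0 < (real d - 2) * c T" and "(real d - 2) * c T \<le> (real d - 2) * mu * exp (8 * T)"
    and "(1 + lam) * b T = \<rho> - a T - (real d - 2) * c T"
proof -
  have T: "0 \<le> T" "r T = \<rho>" "\<And>t. t \<in> {0..T} \<Longrightarrow> r t \<le> \<rho>"
    using hitting_time_nonneg r_hitting_time r_le_until_hitting_time assms(1,2) by (simp_all add: T_def)
  show "0 < a T" and "0 < (real d - 2) * c T"
    using components_pos[OF T(1)] by simp_all
  show "a T \<le> mu * exp (24 * T)"
    using first_phase_bounds(1)[OF T(1,3)] by (simp add: initial_values)
  show "(real d - 2) * c T \<le> (real d - 2) * mu * exp (8 * T)"
    using first_phase_bounds(3)[OF T(1,3)] d_ge_3 by (simp add: initial_values mult_left_mono)
  show "(1 + lam) * b T = \<rho> - a T - (real d - 2) * c T"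
    using T(2) by (simp add: rfun_def)
qed

end

lemma reduced_flow_scaled:
  fixes c0 K1 lam :: real and d :: nat
  assumes "3 \<le> d" and "0 < K1" and "K1 * ln (real d) \<le> lam"
    and "is_flow d lam (ln (real d) powr (- c0) / (real d + lam)) a b c"
  shows "reduced_flow d lam (ln (real d) powr (- c0) / (real d + lam)) a b c"
proof
  have "1 \<le> ln (real d)"
    using one_le_ln \<open>3 \<le> d\<close> by simp
  then have "0 < K1 * ln (real d)"
    using \<open>0 < K1\<close> by simp
  then show "0 < lam"
    using \<open>K1 * ln (real d) \<le> lam\<close> by linarith
  then show "0 < ln (real d) powr (- c0) / (real d + lam)"
    using \<open>1 \<le> ln (real d)\<close> by simp
qed (use assms in simp_all)

lemma first_phase_estimates:
  fixes c0 \<rho> K1 K2 M \<epsilon> lam :: real and d :: nat and a b c :: "real \<Rightarrow> real"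
  defines "\<rho>0 \<equiv> ln (real d) powr (- c0)" and "T \<equiv> Inf {t. t \<ge> 0 \<and> rfun d lam a b c t \<ge> \<rho>}"
  assumes "0 < c0" and "\<rho> < 1/12" and "0 < K1"
    and d: "3 \<le> d" and lam: "K1 * ln (real d) \<le> lam" "lam \<le> K2 * real d"
    and M: "(ln (1 + K2) + 1 + c0) / 6 \<le> M" "exp (4 * (ln (1 + K2) + 1 + c0) / K1) \<le> M"
    and small: "\<rho>0 < \<rho>" "2 * M * \<rho>0 \<le> \<epsilon> * \<rho>"
    and flow: "is_flow d lam (\<rho>0 / (real d + lam)) a b c"
  shows "({t. t \<ge> 0 \<and> rfun d lam a b c t \<ge> \<rho>} \<noteq> {}) \<and>
    (\<forall>t\<in>{0..T}.
           rfun d lam a b c t \<le> \<rho> \<and>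
           a 0 * exp (24 * (1 - \<rho>) * t) \<le> a t \<and> a t \<le> a 0 * exp (24 * t) \<and>
           b 0 * exp (8 * (1 + lam) * (1 - 3 * \<rho>) * t) \<le> b t \<and> b t \<le> b 0 * exp (8 * (1 + lam) * t) \<and>
           c 0 * exp ((8 * (1 - \<rho>) - 16 * \<rho> / (real d - 2)) * t) \<le> c t \<and> c t \<le> c 0 * exp (8 * t)) \<and>
    (T \<le> M * ln (real d) / lam) \<and>
    (\<bar>a T\<bar> \<le> M * \<rho>0 / real d) \<and>
    (\<bar>(real d - 2) * c T\<bar> \<le> M * \<rho>0) \<and>
    ((1 + lam) * b T = \<rho> - a T - (real d - 2) * c T) \<and>
    (\<bar>(1 + lam) * b T - \<rho>\<bar> \<le> \<epsilon> * \<rho>)"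
proof (intro conjI)
  interpret reduced_flow d lam "\<rho>0 / (real d + lam)" a b c
    unfolding \<rho>0_def by (rule reduced_flow_scaled[OF d \<open>0 < K1\<close> lam(1) flow[unfolded \<rho>0_def]])
  have "0 < \<rho>0"
    using one_le_ln[of "real d"] d by (simp add: \<rho>0_def)
  have "r 0 < \<rho>" and "\<rho> < 1/3"
    using r_initial small(1) lam_pos \<open>\<rho> < 1/12\<close> by simp_all
  have T: "0 \<le> T" "\<And>t. t \<in> {0..T} \<Longrightarrow> r t \<le> \<rho>"
    using hitting_time_nonneg r_le_until_hitting_time \<open>r 0 < \<rho>\<close> \<open>\<rho> < 1/3\<close> by (simp_all add: T_def)
  have "\<rho>0 / (real d + lam) = ln (real d) powr (- c0) / (real d + lam)"
    by (simp add: \<rho>0_def)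
  note T_le = hitting_time_le_ln_d[OF \<open>r 0 < \<rho>\<close> \<open>\<rho> < 1/12\<close> less_imp_le[OF \<open>0 < c0\<close>] this lam \<open>0 < K1\<close>,
      folded T_def]
  note endpoint = hitting_time_endpoint[OF \<open>r 0 < \<rho>\<close> \<open>\<rho> < 1/3\<close>, folded T_def]
  show "{t. t \<ge> 0 \<and> r t \<ge> \<rho>} \<noteq> {}"
    using r_reaches[OF \<open>\<rho> < 1/3\<close>] by auto
  show "\<forall>t\<in>{0..T}. r t \<le> \<rho> \<and>
           a 0 * exp (24 * (1 - \<rho>) * t) \<le> a t \<and> a t \<le> a 0 * exp (24 * t) \<and>
           b 0 * exp (8 * (1 + lam) * (1 - 3 * \<rho>) * t) \<le> b t \<and> b t \<le> b 0 * exp (8 * (1 + lam) * t) \<and>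
           c 0 * exp ((8 * (1 - \<rho>) - 16 * \<rho> / (real d - 2)) * t) \<le> c t \<and> c t \<le> c 0 * exp (8 * t)"
    using T(2) first_phase_bounds[where \<rho> = \<rho>] by auto
  have "(ln (1 + K2) + 1 + c0) / 6 * ln (real d) / lam \<le> M * ln (real d) / lam"
    using M(1) one_le_ln[of "real d"] d lam_pos by (intro divide_right_mono mult_right_mono) simp_all
  with T_le(1) show "T \<le> M * ln (real d) / lam"
    by simp
  have "exp (8 * T) \<le> exp (24 * T)"
    using T(1) by simp
  then have exp_le_M: "exp (24 * T) \<le> M" "exp (8 * T) \<le> M" and "0 < M"
    using T_le(2) M(2) exp_gt_zero[of "24 * T"] by linarith+
  have "a T \<le> \<rho>0 / (real d + lam) * exp (24 * T)"
    by (rule endpoint(2))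
  also have "\<dots> \<le> \<rho>0 / (real d + lam) * M"
    using exp_le_M(1) mu_pos by (intro mult_left_mono) auto
  also have "\<dots> \<le> M * \<rho>0 / real d"
    using lam_pos \<open>0 < \<rho>0\<close> d \<open>0 < M\<close> by (simp add: field_simps)
  finally have aT: "a T \<le> M * \<rho>0 / real d" .
  have "(real d - 2) * c T \<le> (real d - 2) * (\<rho>0 / (real d + lam)) * exp (8 * T)"
    by (rule endpoint(4))
  also have "\<dots> \<le> (real d - 2) * (\<rho>0 / (real d + lam)) * M"
    using exp_le_M(2) mu_pos d by (intro mult_left_mono mult_nonneg_nonneg) auto
  also have "\<dots> \<le> M * \<rho>0"
    using lam_pos \<open>0 < \<rho>0\<close> d \<open>0 < M\<close> by (simp add: field_simps)
  finally have CT: "(real d - 2) * c T \<le> M * \<rho>0" .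
  have "M * \<rho>0 / real d \<le> M * \<rho>0"
    using d \<open>0 < M\<close> \<open>0 < \<rho>0\<close> by (simp add: field_simps)
  then show "\<bar>a T\<bar> \<le> M * \<rho>0 / real d" and "\<bar>(real d - 2) * c T\<bar> \<le> M * \<rho>0"
    and "(1 + lam) * b T = \<rho> - a T - (real d - 2) * c T"
    and "\<bar>(1 + lam) * b T - \<rho>\<bar> \<le> \<epsilon> * \<rho>"
    using endpoint(1,3,5) aT CT small(2) by simp_all
qed

theorem propositionB3:
  fixes c0 \<rho> K1 K2 :: real
  assumes "c0 > 0" and "0 < \<rho>" and "\<rho> < 1/12" and "K1 > 0" and "K2 > 0"
  shows "\<exists>M>0. \<forall>\<epsilon>>0. \<exists>D::nat. \<forall>d::nat. \<forall>lam::real. \<forall>a b c :: real \<Rightarrow> real.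
    d \<ge> max 3 D \<longrightarrow> K1 * ln (real d) \<le> lam \<longrightarrow> lam \<le> K2 * real d \<longrightarrow>
    (let \<rho>0 = ln (real d) powr (- c0);
         \<mu> = \<rho>0 / (real d + lam);
         r = rfun d lam a b c;
         T = Inf {t. t \<ge> 0 \<and> r t \<ge> \<rho>};
         B = (\<lambda>t. (1 + lam) * b t);
         C = (\<lambda>t. (real d - 2) * c t)
     in is_flow d lam \<mu> a b c \<longrightarrow>
        {t. t \<ge> 0 \<and> r t \<ge> \<rho>} \<noteq> {} \<and>
        (\<forall>t\<in>{0..T}.
           r t \<le> \<rho> \<and>
           a 0 * exp (24 * (1 - \<rho>) * t) \<le> a t \<and> a t \<le> a 0 * exp (24 * t) \<and>
           b 0 * exp (8 * (1 + lam) * (1 - 3 * \<rho>) * t) \<le> b t \<and> b t \<le> b 0 * exp (8 * (1 + lam) * t) \<and>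
           c 0 * exp ((8 * (1 - \<rho>) - 16 * \<rho> / (real d - 2)) * t) \<le> c t \<and> c t \<le> c 0 * exp (8 * t)) \<and>
        T \<le> M * ln (real d) / lam \<and>
        \<bar>a T\<bar> \<le> M * \<rho>0 / real d \<and>
        \<bar>C T\<bar> \<le> M * \<rho>0 \<and>
        B T = \<rho> - a T - C T \<and>
        \<bar>B T - \<rho>\<bar> \<le> \<epsilon> * \<rho>)"
proof -
  \<comment> \<open>The first summand bounds \<open>lam * T / ln d\<close>; the second bounds the growth factor \<open>exp (24 * T)\<close>
    of \<open>a\<close> and \<open>c\<close>, because \<open>T \<le> (ln (1 + K2) + 1 + c0) / (6 * K1)\<close>.\<close>
  define M where "M = (ln (1 + K2) + 1 + c0) / 6 + exp (4 * (ln (1 + K2) + 1 + c0) / K1)"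
  have M: "(ln (1 + K2) + 1 + c0) / 6 \<le> M" "exp (4 * (ln (1 + K2) + 1 + c0) / K1) \<le> M"
    using assms by (simp_all add: M_def)
  then have "0 < M"
    using exp_gt_zero[of "4 * (ln (1 + K2) + 1 + c0) / K1"] by linarith
  have small: "\<exists>D. \<forall>d. max 3 D \<le> d \<longrightarrow>
      3 \<le> d \<and> ln (real d) powr (- c0) < \<rho> \<and> 2 * M * ln (real d) powr (- c0) \<le> \<epsilon> * \<rho>"
    if "0 < \<epsilon>" for \<epsilon>
  proof -
    have "0 < min \<rho> (\<epsilon> * \<rho> / (2 * M))"
      using that assms(2) \<open>0 < M\<close> by simp
    then obtain D where "\<forall>d\<ge>D. ln (real d) powr (- c0) < min \<rho> (\<epsilon> * \<rho> / (2 * M))"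
      using eventually_ln_powr_less[OF assms(1)] by blast
    then show ?thesis
      using \<open>0 < M\<close> by (intro exI[of _ D]) (auto simp: field_simps intro: less_imp_le)
  qed
  show ?thesis
    unfolding Let_def
    apply (intro exI[of _ M] conjI allI impI \<open>0 < M\<close>)
    apply (drule small, elim exE)
    apply (rule_tac x = D in exI, intro allI impI)
    apply (rule first_phase_estimates[OF assms(1,3,4) _ _ _ M]; auto)
    done
qed

end
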